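(* Let $E$ and $F$ be finite cyclic groups. Then $g(OD(E\oplus F))=3$ if and only if at least one of the following holds: (a) $|E|$ is composite; (b) $|F|$ is composite; (c) $|E|$ and $|F|$ are distinct primes.
   Context: $E\oplus F$ denotes the external direct product of $E$ and $F$. For a finite group $G$, $o(x)$ denotes the order of $x\in G$. The order-divisor graph $OD(G)$ is the simple undirected graph with vertex set $G$, in which two distinct vertices $x,y$ are adjacent if and only if $o(x)\neq o(y)$ and either $o(x)\mid o(y)$ or $o(y)\mid o(x)$. The girth $g(\Gamma)$ of a graph $\Gamma$ is the length of a shortest cycle in $\Gamma$ (taken to be $0$ if $\Gamma$ has no cycle). *)

theory Defs
  imports "HOL-Algebra.Algebra"
begin

definition od_adj :: "('a, 'b) monoid_scheme \<Rightarrow> 'a \<Rightarrow> 'a \<Rightarrow> bool" where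
  "od_adj G x y \<longleftrightarrow> x \<in> carrier G \<and> y \<in> carrier G \<and> x \<noteq> y \<and>
     group.ord G x \<noteq> group.ord G y \<and>
     (group.ord G x dvd group.ord G y \<or> group.ord G y dvd group.ord G x)"

definition is_cycle :: "'a set \<Rightarrow> ('a \<Rightarrow> 'a \<Rightarrow> bool) \<Rightarrow> 'a list \<Rightarrow> bool" where
  "is_cycle V adj cs \<longleftrightarrow> 3 \<le> length cs \<and> distinct cs \<and> set cs \<subseteq> V \<and>
     (\<forall>i < length cs. adj (cs ! i) (cs ! (Suc i mod length cs)))"

definition girth :: "'a set \<Rightarrow> ('a \<Rightarrow> 'a \<Rightarrow> bool) \<Rightarrow> nat" where
  "girth V adj = (if \<exists>cs. is_cycle V adj cs
                  then (LEAST n. \<exists>cs. is_cycle V adj cs \<and> length cs = n) else 0)"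

definition od_girth :: "('a, 'b) monoid_scheme \<Rightarrow> nat" where
  "od_girth G = girth (carrier G) (od_adj G)"

definition composite :: "nat \<Rightarrow> bool" where
  "composite n \<longleftrightarrow> 1 < n \<and> \<not> Factorial_Ring.prime n"

end

theory Submission
  imports Defs
begin

text \<open>In a group whose element orders are exactly the divisors of some \<open>N > 0\<close>,
  a triangle of OD(G) is a divisibility chain of three distinct element orders, so it exists
  iff \<open>N\<close> has a divisor strictly between \<open>1\<close> and \<open>N\<close>, i.e. iff \<open>N\<close> is composite. For cyclic
  \<open>E\<close> and \<open>F\<close> the orders in \<open>E \<oplus> F\<close> are exactly the divisors of \<open>lcm |E| |F|\<close>, and
  that lcm is composite iff one of (a), (b), (c) holds.\<close>

lemma pow_DirProd:
  "(x, y) [^]\<^bsub>G \<times>\<times> H\<^esub> (n::nat) = (x [^]\<^bsub>G\<^esub> n, y [^]\<^bsub>H\<^esub> n)"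
  by (induction n) auto

lemma ord_DirProd:
  assumes "group G" "group H" "x \<in> carrier G" "y \<in> carrier H"
  shows "group.ord (G \<times>\<times> H) (x, y) = lcm (group.ord G x) (group.ord H y)"
proof -
  interpret G: group G by fact
  interpret H: group H by fact
  interpret GH: group "G \<times>\<times> H" using DirProd_group assms by blast
  show ?thesis
    using assms(3,4)
    by (simp add: GH.ord_unique pow_DirProd G.pow_eq_id[symmetric] H.pow_eq_id[symmetric])
qed

lemma (in group) exists_ord_eq_dvd:
  assumes "x \<in> carrier G" "d dvd ord x" "ord x \<noteq> 0"
  shows "\<exists>y\<in>carrier G. ord y = d"
proof -
  obtain k where k: "ord x = d * k" using assms(2) by blast
  then have "ord (x [^] k) = d"
    using ord_pow[OF assms(1), of k] assms(3) by simp
  then show ?thesis using assms(1) by blast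
qed

lemma (in group) cyclic_group_obtain_generator_ord:
  assumes "cyclic_group G"
  obtains g where "g \<in> carrier G" "ord g = order G"
proof -
  obtain g where "g \<in> carrier G" "subgroup_generated G {g} = G"
    using assms unfolding cyclic_group_def by blast
  then show ?thesis using cyclic_order_is_ord that by metis
qed

lemma ord_image_DirProd_cyclic:
  assumes "group E" "group F" "finite (carrier E)" "finite (carrier F)"
    and "cyclic_group E" "cyclic_group F"
  shows "group.ord (E \<times>\<times> F) ` carrier (E \<times>\<times> F) = {d. d dvd lcm (order E) (order F)}"
proof -
  interpret E: group E by fact
  interpret F: group F by fact
  interpret EF: group "E \<times>\<times> F" using DirProd_group assms by blast
  show ?thesis
  proof (intro equalityI subsetI)
    fix d assume "d \<in> EF.ord ` carrier (E \<times>\<times> F)"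
    then obtain x y where "x \<in> carrier E" "y \<in> carrier F" "d = EF.ord (x, y)" by auto
    then show "d \<in> {d. d dvd lcm (order E) (order F)}"
      by (simp add: ord_DirProd assms lcm_mono E.ord_dvd_group_order F.ord_dvd_group_order)
  next
    fix d assume d: "d \<in> {d. d dvd lcm (order E) (order F)}"
    obtain g where g: "g \<in> carrier E" "E.ord g = order E"
      using E.cyclic_group_obtain_generator_ord[OF assms(5)] .
    obtain h where h: "h \<in> carrier F" "F.ord h = order F"
      using F.cyclic_group_obtain_generator_ord[OF assms(6)] .
    have gh: "EF.ord (g, h) = lcm (order E) (order F)"
      using ord_DirProd[OF assms(1,2) g(1) h(1)] g h by simp
    have "lcm (order E) (order F) \<noteq> 0"
      using assms(3,4) E.order_gt_0_iff_finite F.order_gt_0_iff_finite by simp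
    then show "d \<in> EF.ord ` carrier (E \<times>\<times> F)"
      using EF.exists_ord_eq_dvd[of "(g, h)" d] d g(1) h(1) gh by auto
  qed
qed

lemma is_cycle_length_3:
  "is_cycle V adj [a, b, c] \<longleftrightarrow>
     distinct [a, b, c] \<and> {a, b, c} \<subseteq> V \<and> adj a b \<and> adj b c \<and> adj c a"
  unfolding is_cycle_def by (simp add: All_less_Suc2)

lemma girth_eq_3_iff: "girth V adj = 3 \<longleftrightarrow> (\<exists>cs. is_cycle V adj cs \<and> length cs = 3)"
proof
  assume girth: "girth V adj = 3"
  then have "\<exists>n cs. is_cycle V adj cs \<and> length cs = n"
    unfolding girth_def by (metis zero_neq_numeral)
  from LeastI_ex[OF this] show "\<exists>cs. is_cycle V adj cs \<and> length cs = 3"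
    using girth unfolding girth_def by (auto split: if_splits)
next
  assume "\<exists>cs. is_cycle V adj cs \<and> length cs = 3"
  moreover have "(LEAST n. \<exists>cs. is_cycle V adj cs \<and> length cs = n) = 3"
    by (rule Least_equality) (use calculation is_cycle_def in auto)
  ultimately show "girth V adj = 3" unfolding girth_def by auto
qed

lemma od_girth_eq_3_iff_triangle:
  "od_girth G = 3 \<longleftrightarrow> (\<exists>a b c. od_adj G a b \<and> od_adj G b c \<and> od_adj G c a)"
proof -
  have triangle: "is_cycle (carrier G) (od_adj G) [a, b, c] \<longleftrightarrow>
      od_adj G a b \<and> od_adj G b c \<and> od_adj G c a" for a b c
    unfolding is_cycle_length_3 od_adj_def by auto
  have "(\<exists>cs. is_cycle (carrier G) (od_adj G) cs \<and> length cs = 3) \<longleftrightarrow>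
        (\<exists>a b c. is_cycle (carrier G) (od_adj G) [a, b, c])"
    by (auto simp: numeral_3_eq_3 length_Suc_conv)
  then show ?thesis unfolding od_girth_def girth_eq_3_iff triangle .
qed

lemma od_girth_eq_3_if_ord_chain:
  assumes "a \<in> carrier G" "b \<in> carrier G" "c \<in> carrier G"
    and "group.ord G a dvd group.ord G b" "group.ord G b dvd group.ord G c"
    and "distinct [group.ord G a, group.ord G b, group.ord G c]"
  shows "od_girth G = 3"
proof -
  have "od_adj G a b \<and> od_adj G b c \<and> od_adj G c a"
    using assms dvd_trans[OF assms(4,5)] unfolding od_adj_def by auto
  then show ?thesis unfolding od_girth_eq_3_iff_triangle by blast
qed

lemma distinct_ords_if_od_girth_eq_3:
  assumes "od_girth G = 3"
  obtains a b c where "{a, b, c} \<subseteq> carrier G"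
    "distinct [group.ord G a, group.ord G b, group.ord G c]"
proof -
  obtain a b c where "od_adj G a b" "od_adj G b c" "od_adj G c a"
    using assms unfolding od_girth_eq_3_iff_triangle by blast
  then have "{a, b, c} \<subseteq> carrier G" "distinct [group.ord G a, group.ord G b, group.ord G c]"
    unfolding od_adj_def by auto
  then show ?thesis by (rule that)
qed

lemma composite_iff_proper_prime_divisor:
  "composite N \<longleftrightarrow> N \<noteq> 0 \<and> (\<exists>p. Factorial_Ring.prime p \<and> p dvd N \<and> p \<noteq> N)"
proof
  assume N: "composite N"
  then have "N \<noteq> 1" "N \<noteq> 0" "\<not> Factorial_Ring.prime N" unfolding composite_def by simp_all
  moreover obtain p where "Factorial_Ring.prime p" "p dvd N"
    using prime_factor_nat[OF \<open>N \<noteq> 1\<close>] by blast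
  ultimately show "N \<noteq> 0 \<and> (\<exists>p. Factorial_Ring.prime p \<and> p dvd N \<and> p \<noteq> N)" by blast
next
  assume "N \<noteq> 0 \<and> (\<exists>p. Factorial_Ring.prime p \<and> p dvd N \<and> p \<noteq> N)"
  then obtain p where p: "Factorial_Ring.prime p" "p dvd N" "p \<noteq> N" and "N \<noteq> 0" by blast
  have "1 < p" using p(1) by (rule prime_gt_1_nat)
  also have "p \<le> N" using p(2) \<open>N \<noteq> 0\<close> by (simp add: dvd_imp_le)
  finally have "1 < N" .
  moreover have "\<not> Factorial_Ring.prime N"
    using p prime_nat_iff[of N] by (metis not_prime_1)
  ultimately show "composite N" unfolding composite_def by blast
qed

lemma od_girth_eq_3_iff_composite:
  assumes ords: "group.ord G ` carrier G = {d. d dvd N}" and "N \<noteq> 0"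
  shows "od_girth G = 3 \<longleftrightarrow> composite N"
proof
  assume "od_girth G = 3"
  then obtain a b c where abc: "{a, b, c} \<subseteq> carrier G"
    "distinct [group.ord G a, group.ord G b, group.ord G c]"
    by (rule distinct_ords_if_od_girth_eq_3)
  show "composite N"
  proof (rule ccontr)
    assume "\<not> composite N"
    then have "N = 1 \<or> Factorial_Ring.prime N" using \<open>N \<noteq> 0\<close> unfolding composite_def by auto
    then have "group.ord G x \<in> {1, N}" if "x \<in> carrier G" for x
      using ords that by (auto simp: prime_nat_iff)
    then have "{group.ord G a, group.ord G b, group.ord G c} \<subseteq> {1, N}"
      using abc(1) by auto
    then show False using abc(2) by auto
  qed
next
  assume N: "composite N"
  then obtain p where p: "Factorial_Ring.prime p" "p dvd N" "p \<noteq> N"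
    unfolding composite_iff_proper_prime_divisor by blast
  have ord_exists: "\<exists>x\<in>carrier G. group.ord G x = d" if "d dvd N" for d
    using that ords by (metis (mono_tags, lifting) image_iff mem_Collect_eq)
  obtain a where a: "a \<in> carrier G" "group.ord G a = 1" using ord_exists[of 1] by auto
  obtain b where b: "b \<in> carrier G" "group.ord G b = p" using ord_exists[OF p(2)] by auto
  obtain c where c: "c \<in> carrier G" "group.ord G c = N" using ord_exists[of N] by auto
  have "distinct [1, p, N]"
    using p N prime_gt_1_nat[of p] unfolding composite_def by auto
  then show "od_girth G = 3"
    using od_girth_eq_3_if_ord_chain[OF a(1) b(1) c(1)] p(2) unfolding a(2) b(2) c(2) by simp
qed

lemma composite_dvd:
  assumes "composite m" "m dvd n" "n \<noteq> 0"
  shows "composite n"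
proof -
  have m: "1 < m" "\<not> Factorial_Ring.prime m" using assms(1) unfolding composite_def by simp_all
  have "m \<le> n" using assms(2,3) by (simp add: dvd_imp_le)
  then have "1 < n" using m(1) by linarith
  moreover have "\<not> Factorial_Ring.prime n"
    using assms(2) m prime_nat_iff[of n] by (metis less_irrefl)
  ultimately show ?thesis unfolding composite_def by blast
qed

lemma composite_mult_primes:
  assumes "Factorial_Ring.prime p" "Factorial_Ring.prime q"
  shows "composite (p * q)"
proof -
  have "1 < p * q"
    using prime_gt_1_nat[OF assms(1)] prime_gt_1_nat[OF assms(2)] by (rule less_1_mult)
  moreover have "\<not> Factorial_Ring.prime (p * q)"
    using assms prime_product[of p q] by auto
  ultimately show ?thesis unfolding composite_def by blast
qed

lemma composite_lcm_iff:
  fixes m n :: nat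
  assumes "m \<noteq> 0" "n \<noteq> 0"
  shows "composite (lcm m n) \<longleftrightarrow> composite m \<or> composite n \<or>
           (Factorial_Ring.prime m \<and> Factorial_Ring.prime n \<and> m \<noteq> n)"
    (is "_ \<longleftrightarrow> ?cases")
proof
  assume lcm: "composite (lcm m n)"
  show ?cases
  proof (rule ccontr)
    assume "\<not> ?cases"
    then have "m = 1 \<or> Factorial_Ring.prime m" "n = 1 \<or> Factorial_Ring.prime n"
        "Factorial_Ring.prime m \<and> Factorial_Ring.prime n \<longrightarrow> m = n"
      using assms unfolding composite_def by auto
    then have "lcm m n = 1 \<or> Factorial_Ring.prime (lcm m n)" by auto
    then show False using lcm unfolding composite_def by auto
  qed
next
  have lcm: "lcm m n \<noteq> 0" using assms by (simp add: lcm_eq_0_iff)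
  assume ?cases
  then consider "composite m" | "composite n"
    | "Factorial_Ring.prime m" "Factorial_Ring.prime n" "m \<noteq> n" by blast
  then show "composite (lcm m n)"
  proof cases
    case 1
    then show ?thesis using composite_dvd lcm by blast
  next
    case 2
    then show ?thesis using composite_dvd lcm by blast
  next
    case 3
    then have "lcm m n = m * n" by (simp add: lcm_coprime primes_coprime)
    then show ?thesis using 3 composite_mult_primes by simp
  qed
qed

theorem mainTheorem10:
  fixes E :: "('a, 'c) monoid_scheme" and F :: "('b, 'd) monoid_scheme"
  assumes "group E" "group F"
    and "finite (carrier E)" "finite (carrier F)"
    and "cyclic_group E" "cyclic_group F"
  shows "od_girth (DirProd E F) = 3 \<longleftrightarrow>
           (composite (order E) \<or> composite (order F) \<or>
            (Factorial_Ring.prime (order E) \<and> Factorial_Ring.prime (order F) \<and> order E \<noteq> order F))"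
proof -
  have orders: "order E \<noteq> 0" "order F \<noteq> 0"
    using assms(3,4) monoid.order_gt_0_iff_finite[OF group.is_monoid] assms(1,2) by auto
  have "od_girth (E \<times>\<times> F) = 3 \<longleftrightarrow> composite (lcm (order E) (order F))"
    using od_girth_eq_3_iff_composite[OF ord_image_DirProd_cyclic[OF assms]] orders
    by (simp add: lcm_eq_0_iff)
  then show ?thesis using composite_lcm_iff[OF orders] by simp
qed

end
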